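(* Consider the system $x_{t+1}=Ax_t+Bu_t+v_t$ with i.i.d. disturbances from a distribution $\mathcal{D}$ on $\mathbb{R}^n$, positive definite $Q,R$, $\gamma\in(0,1)$ and a feedback gain $K$ with $A_K=A+BK$. Let $P$ solve $P=Q+K^{\rm T}RK+\gamma A_K^{\rm T}PA_K$ and for $x\in\mathbb{R}^n$ let $$G^{K}(x)=x^{\rm T}Px+2\sum_{k=0}^{\infty}\gamma^{k+1}w_k^{\rm T}PA_K^{k+1}x+\sum_{k=0}^{\infty}\gamma^{k+1}w_k^{\rm T}Pw_k+2\sum_{k=1}^{\infty}\gamma^{k+1}w_k^{\rm T}P\sum_{\tau=0}^{k-1}A_K^{k-\tau}w_\tau,$$ with $w_k\sim\mathcal{D}$ mutually independent. Assume $\mathbb{E}[w_k]=0$ and $\mathbb{E}[\|w_k\|^4]\le\sigma_4^4$ for all $k\in\mathbb{N}$, and that $K$ is stabilizing with $\|A_K\|=\rho_K<1$ (spectral norm). Then the variance of $G^K(x)$ is bounded (finite).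
   Context: $\|\cdot\|$ denotes the Euclidean norm for vectors and the spectral norm for matrices. *)

theory Defs
  imports "HOL-Analysis.Analysis" "HOL-Probability.Probability"
begin

primrec matpow :: "real^'n^'n \<Rightarrow> nat \<Rightarrow> real^'n^'n" where
  "matpow A 0 = mat 1"
| "matpow A (Suc k) = A ** matpow A k"

definition pos_def_mat :: "real^'n^'n \<Rightarrow> bool" where
  "pos_def_mat M \<longleftrightarrow> transpose M = M \<and> (\<forall>x. x \<noteq> 0 \<longrightarrow> x \<bullet> (M *v x) > 0)"

definition spec_norm :: "real^'n^'m \<Rightarrow> real" where
  "spec_norm M = onorm (\<lambda>x. M *v x)"

definition GK :: "real^'n^'n \<Rightarrow> real^'n^'n \<Rightarrow> real \<Rightarrow> (nat \<Rightarrow> real^'n) \<Rightarrow> real^'n \<Rightarrow> real" where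
  "GK P AK \<gamma> w x =
     x \<bullet> (P *v x)
   + 2 * (\<Sum>k. \<gamma>^(k+1) * (w k \<bullet> (P *v (matpow AK (k+1) *v x))))
   + (\<Sum>k. \<gamma>^(k+1) * (w k \<bullet> (P *v w k)))
   + 2 * (\<Sum>j. (\<lambda>k. \<gamma>^(k+1) * (w k \<bullet> (P *v (\<Sum>\<tau><k. matpow AK (k-\<tau>) *v w \<tau>)))) (j+1))"

end

theory Submission
  imports Defs
begin

text \<open>
  Fix \<open>\<gamma> < d < 1\<close>. The random variable \<open>V = \<Sum>\<^sub>k (d\<^sup>k \<parallel>w\<^sub>k\<parallel>\<^sup>2)\<^sup>2\<close> is integrable,
  since \<open>E[V] \<le> \<sigma>\<^sub>4\<^sup>4 \<Sum>\<^sub>k d\<^sup>2\<^sup>k\<close>. Wherever \<open>V\<close> is finite, \<open>d\<^sup>k \<parallel>w\<^sub>k\<parallel>\<^sup>2 \<le> \<surd>V\<close> for all \<open>k\<close>,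
  so by \<open>\<parallel>w\<^sub>j\<parallel>\<parallel>w\<^sub>k\<parallel> \<le> (\<parallel>w\<^sub>j\<parallel>\<^sup>2 + \<parallel>w\<^sub>k\<parallel>\<^sup>2)/2\<close> the \<open>k\<close>-th terms of the three series
  defining \<open>G\<^sup>K(x)\<close> are bounded by \<open>O(\<gamma>\<^sup>k) + \<surd>V \<cdot> O(k (\<gamma>/d)\<^sup>k)\<close>. Hence
  \<open>|G\<^sup>K(x)| \<le> C\<^sub>0 + C\<^sub>1 \<surd>V\<close> and \<open>G\<^sup>K(x)\<^sup>2 \<le> 2C\<^sub>0\<^sup>2 + 2C\<^sub>1\<^sup>2 V\<close>, which is integrable.
\<close>

lemma spec_norm_nonneg: "0 \<le> spec_norm (M :: real^'n^'m)"
  unfolding spec_norm_def by (rule onorm_pos_le[OF matrix_vector_mul_bounded_linear])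

lemma norm_matrix_vector_mult_le: "norm (M *v x) \<le> spec_norm M * norm x"
  unfolding spec_norm_def by (rule onorm[OF matrix_vector_mul_bounded_linear])

lemma abs_inner_matrix_vector_mult_le:
  "\<bar>a \<bullet> (M *v b)\<bar> \<le> spec_norm M * norm a * norm b"
proof -
  have "\<bar>a \<bullet> (M *v b)\<bar> \<le> norm a * norm (M *v b)" by (rule Cauchy_Schwarz_ineq2)
  also have "\<dots> \<le> norm a * (spec_norm M * norm b)"
    by (intro mult_left_mono norm_matrix_vector_mult_le) simp
  finally show ?thesis by (simp add: mult_ac)
qed

lemma norm_matpow_mult_le:
  assumes "spec_norm L \<le> 1"
  shows "norm (matpow L j *v v) \<le> norm v"
proof (induction j)
  case (Suc j)
  have "norm (matpow L (Suc j) *v v) = norm (L *v (matpow L j *v v))"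
    by (simp add: matrix_vector_mul_assoc)
  also have "\<dots> \<le> spec_norm L * norm (matpow L j *v v)" by (rule norm_matrix_vector_mult_le)
  also have "\<dots> \<le> norm (matpow L j *v v)"
    by (rule mult_left_le_one_le) (simp_all add: assms spec_norm_nonneg)
  finally show ?case using Suc by simp
qed simp

lemma borel_measurable_matrix_vector_mult[measurable (raw)]:
  "f \<in> borel_measurable M \<Longrightarrow> (\<lambda>x. (A :: real^'n^'m) *v f x) \<in> borel_measurable M"
  by (rule borel_measurable_continuous_on[OF linear_continuous_on[OF matrix_vector_mul_bounded_linear]])

lemma summable_real_mult_power:
  fixes x :: real
  assumes "\<bar>x\<bar> < 1"
  shows "summable (\<lambda>n. real n * x ^ n)"
proof -
  have "summable (\<lambda>n. diffs (\<lambda>_. 1 :: real) n * x ^ n)"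
    by (rule termdiff_converges[of x 1]) (use assms in auto)
  then show ?thesis
    by (simp add: diffs_def summable_powser_split_head[of real, simplified])
qed

lemma summable_suminf_le_affine:
  fixes a :: "nat \<Rightarrow> 'a :: banach"
  assumes "\<And>k. norm (a k) \<le> p k + t * q k" and "summable p" and "summable q"
  shows "summable a \<and> norm (suminf a) \<le> suminf p + t * suminf q"
proof -
  have pq: "summable (\<lambda>k. p k + t * q k)" using assms(2,3) by (intro summable_add summable_mult)
  have "summable a" by (rule summable_comparison_test[OF _ pq]) (use assms(1) in auto)
  moreover have "norm (suminf a) \<le> (\<Sum>k. p k + t * q k)" by (rule norm_suminf_le[OF assms(1) pq])
  moreover have "(\<Sum>k. p k + t * q k) = suminf p + t * suminf q"
    using assms(2,3) by (simp add: suminf_add[symmetric] suminf_mult summable_mult)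
  ultimately show ?thesis by simp
qed

lemma abs_le_sqrt_suminf_power2:
  fixes f :: "nat \<Rightarrow> real"
  assumes "summable (\<lambda>k. (f k)\<^sup>2)"
  shows "\<bar>f k\<bar> \<le> sqrt (\<Sum>k. (f k)\<^sup>2)"
proof -
  have "(f k)\<^sup>2 \<le> (\<Sum>k. (f k)\<^sup>2)"
    using sum_le_suminf[OF assms, of "{k}"] by simp
  then have "sqrt ((f k)\<^sup>2) \<le> sqrt (\<Sum>k. (f k)\<^sup>2)" by (rule real_sqrt_le_mono)
  then show ?thesis by simp
qed

definition GK_drift_term ::
    "real^'n^'n \<Rightarrow> real^'n^'n \<Rightarrow> real \<Rightarrow> (nat \<Rightarrow> real^'n) \<Rightarrow> real^'n \<Rightarrow> nat \<Rightarrow> real" where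
  "GK_drift_term P L \<gamma> u x k = \<gamma>^(k+1) * (u k \<bullet> (P *v (matpow L (k+1) *v x)))"

definition GK_noise_term :: "real^'n^'n \<Rightarrow> real \<Rightarrow> (nat \<Rightarrow> real^'n) \<Rightarrow> nat \<Rightarrow> real" where
  "GK_noise_term P \<gamma> u k = \<gamma>^(k+1) * (u k \<bullet> (P *v u k))"

definition GK_cross_term ::
    "real^'n^'n \<Rightarrow> real^'n^'n \<Rightarrow> real \<Rightarrow> (nat \<Rightarrow> real^'n) \<Rightarrow> nat \<Rightarrow> real" where
  "GK_cross_term P L \<gamma> u k = \<gamma>^(k+1) * (u k \<bullet> (P *v (\<Sum>\<tau><k. matpow L (k-\<tau>) *v u \<tau>)))"

lemma GK_eq_terms:
  "GK P L \<gamma> u x = x \<bullet> (P *v x) + 2 * suminf (GK_drift_term P L \<gamma> u x)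
     + suminf (GK_noise_term P \<gamma> u) + 2 * (\<Sum>j. GK_cross_term P L \<gamma> u (j+1))"
  unfolding GK_def GK_drift_term_def[abs_def] GK_noise_term_def[abs_def] GK_cross_term_def
  by simp

lemma power_mult_norm_mult_norm_le:
  assumes "0 \<le> \<gamma>" "0 < d" "d \<le> 1" "\<And>k. d^k * (norm (u k))\<^sup>2 \<le> T" "j \<le> k"
  shows "\<gamma>^k * (norm (u j) * norm (u k)) \<le> T * (\<gamma>/d)^k"
proof -
  have "d^k * (norm (u j))\<^sup>2 \<le> d^j * (norm (u j))\<^sup>2"
    using assms(2,3,5) by (intro mult_right_mono power_decreasing) auto
  also have "\<dots> \<le> T" by (rule assms(4))
  finally have j: "d^k * (norm (u j))\<^sup>2 \<le> T" .
  have "d^k * (norm (u j) * norm (u k)) \<le> (d^k * (norm (u j))\<^sup>2 + d^k * (norm (u k))\<^sup>2) / 2"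
    using assms(2) sum_squares_bound[of "sqrt (d^k) * norm (u j)" "sqrt (d^k) * norm (u k)"]
    by (simp add: power_mult_distrib mult_ac)
  also have "\<dots> \<le> T" using j assms(4)[of k] by simp
  finally have "d^k * (norm (u j) * norm (u k)) \<le> T" .
  then have "(\<gamma>/d)^k * (d^k * (norm (u j) * norm (u k))) \<le> (\<gamma>/d)^k * T"
    using assms(1,2) by (intro mult_left_mono) auto
  then show ?thesis using assms(2) by (simp add: power_divide mult.commute)
qed

lemma abs_GK_drift_term_le:
  assumes "spec_norm L \<le> 1" "0 \<le> \<gamma>" "\<gamma> \<le> 1" "0 < d" "d \<le> 1"
    and "\<And>k. d^k * (norm (u k))\<^sup>2 \<le> T"
  shows "\<bar>GK_drift_term P L \<gamma> u x k\<bar>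
           \<le> spec_norm P * norm x * \<gamma>^(k+1) + T * (spec_norm P * norm x * (\<gamma>/d)^k)"
proof -
  let ?c = "spec_norm P * norm x"
  have "\<bar>u k \<bullet> (P *v (matpow L (k+1) *v x))\<bar>
          \<le> spec_norm P * norm (u k) * norm (matpow L (k+1) *v x)"
    by (rule abs_inner_matrix_vector_mult_le)
  also have "\<dots> \<le> spec_norm P * norm (u k) * norm x"
    by (intro mult_left_mono norm_matpow_mult_le[OF assms(1)]) (simp add: spec_norm_nonneg)
  finally have "\<gamma>^(k+1) * \<bar>u k \<bullet> (P *v (matpow L (k+1) *v x))\<bar>
                  \<le> \<gamma>^(k+1) * (spec_norm P * norm (u k) * norm x)"
    using assms(2) by (intro mult_left_mono) simp_all
  then have "\<bar>GK_drift_term P L \<gamma> u x k\<bar> \<le> ?c * (\<gamma>^(k+1) * norm (u k))"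
    using assms(2) by (simp add: GK_drift_term_def abs_mult mult_ac)
  also have "\<gamma>^(k+1) * norm (u k) \<le> \<gamma>^(k+1) + T * (\<gamma>/d)^k"
  proof -
    have "norm (u k) \<le> 1 + norm (u k) * norm (u k)"
      using sum_squares_bound[of 1 "norm (u k)"] norm_ge_zero[of "u k"]
      unfolding power2_eq_square by linarith
    then have "\<gamma>^(k+1) * norm (u k) \<le> \<gamma>^(k+1) * (1 + norm (u k) * norm (u k))"
      using assms(2) by (intro mult_left_mono) simp_all
    also have "\<dots> = \<gamma>^(k+1) + \<gamma> * (\<gamma>^k * (norm (u k) * norm (u k)))"
      by (simp add: algebra_simps)
    also have "\<dots> \<le> \<gamma>^(k+1) + \<gamma>^k * (norm (u k) * norm (u k))"
      using assms(2,3) by (intro add_left_mono mult_left_le_one_le) auto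
    also have "\<dots> \<le> \<gamma>^(k+1) + T * (\<gamma>/d)^k"
      using power_mult_norm_mult_norm_le[OF assms(2,4,5,6) order_refl] by simp
    finally show ?thesis .
  qed
  then have "?c * (\<gamma>^(k+1) * norm (u k)) \<le> ?c * (\<gamma>^(k+1) + T * (\<gamma>/d)^k)"
    by (intro mult_left_mono) (simp_all add: spec_norm_nonneg)
  finally show ?thesis by (simp add: algebra_simps)
qed

lemma abs_GK_noise_term_le:
  assumes "0 \<le> \<gamma>" "\<gamma> \<le> 1" "0 < d" "d \<le> 1" "\<And>k. d^k * (norm (u k))\<^sup>2 \<le> T"
  shows "\<bar>GK_noise_term P \<gamma> u k\<bar> \<le> T * (spec_norm P * (\<gamma>/d)^k)"
proof -
  have "\<gamma>^(k+1) * \<bar>u k \<bullet> (P *v u k)\<bar> \<le> \<gamma>^(k+1) * (spec_norm P * norm (u k) * norm (u k))"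
    using assms(1) by (intro mult_left_mono abs_inner_matrix_vector_mult_le) simp
  then have "\<bar>GK_noise_term P \<gamma> u k\<bar> \<le> spec_norm P * (\<gamma> * (\<gamma>^k * (norm (u k) * norm (u k))))"
    using assms(1) by (simp add: GK_noise_term_def abs_mult mult_ac)
  also have "\<dots> \<le> spec_norm P * (\<gamma>^k * (norm (u k) * norm (u k)))"
    using assms(1,2) by (intro mult_left_mono mult_left_le_one_le) (simp_all add: spec_norm_nonneg)
  also have "\<dots> \<le> spec_norm P * (T * (\<gamma>/d)^k)"
    by (intro mult_left_mono power_mult_norm_mult_norm_le[OF assms(1,3,4,5) order_refl])
       (simp add: spec_norm_nonneg)
  finally show ?thesis by (simp add: mult_ac)
qed

lemma abs_GK_cross_term_le:
  assumes "spec_norm L \<le> 1" "0 \<le> \<gamma>" "\<gamma> \<le> 1" "0 < d" "d \<le> 1"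
    and "\<And>k. d^k * (norm (u k))\<^sup>2 \<le> T"
  shows "\<bar>GK_cross_term P L \<gamma> u k\<bar> \<le> T * (spec_norm P * real k * (\<gamma>/d)^k)"
proof -
  let ?S = "\<Sum>\<tau><k. matpow L (k-\<tau>) *v u \<tau>"
  have "\<bar>u k \<bullet> (P *v ?S)\<bar> \<le> spec_norm P * norm (u k) * norm ?S"
    by (rule abs_inner_matrix_vector_mult_le)
  also have "norm ?S \<le> (\<Sum>\<tau><k. norm (u \<tau>))"
    by (rule order_trans[OF norm_sum sum_mono]) (rule norm_matpow_mult_le[OF assms(1)])
  then have "spec_norm P * norm (u k) * norm ?S \<le> spec_norm P * norm (u k) * (\<Sum>\<tau><k. norm (u \<tau>))"
    by (intro mult_left_mono) (simp_all add: spec_norm_nonneg)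
  finally have "\<gamma>^(k+1) * \<bar>u k \<bullet> (P *v ?S)\<bar> \<le> \<gamma>^(k+1) * (spec_norm P * norm (u k) * (\<Sum>\<tau><k. norm (u \<tau>)))"
    using assms(2) by (intro mult_left_mono) simp_all
  then have "\<bar>GK_cross_term P L \<gamma> u k\<bar>
               \<le> spec_norm P * (\<gamma> * (\<Sum>\<tau><k. \<gamma>^k * (norm (u \<tau>) * norm (u k))))"
    using assms(2) by (simp add: GK_cross_term_def abs_mult sum_distrib_left mult_ac)
  also have "\<dots> \<le> spec_norm P * (real k * (T * (\<gamma>/d)^k))"
  proof (intro mult_left_mono)
    have "\<gamma> * (\<Sum>\<tau><k. \<gamma>^k * (norm (u \<tau>) * norm (u k))) \<le> (\<Sum>\<tau><k. \<gamma>^k * (norm (u \<tau>) * norm (u k)))"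
      using assms(2,3) by (intro mult_left_le_one_le sum_nonneg) simp_all
    also have "\<dots> \<le> (\<Sum>\<tau><k. T * (\<gamma>/d)^k)"
      by (intro sum_mono power_mult_norm_mult_norm_le[OF assms(2,4,5,6)]) simp
    finally show "\<gamma> * (\<Sum>\<tau><k. \<gamma>^k * (norm (u \<tau>) * norm (u k))) \<le> real k * (T * (\<gamma>/d)^k)"
      by simp
  qed (simp add: spec_norm_nonneg)
  finally show ?thesis by (simp add: mult_ac)
qed

lemma GK_affine_bound:
  fixes P L :: "real^'n^'n" and x :: "real^'n"
  assumes "spec_norm L \<le> 1" "0 < \<gamma>" "\<gamma> < d" "d \<le> 1"
  obtains C0 C1 where
    "\<And>u T. (\<And>k. d^k * (norm (u k))\<^sup>2 \<le> T) \<Longrightarrow>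
       summable (GK_drift_term P L \<gamma> u x) \<and> summable (GK_noise_term P \<gamma> u)
       \<and> summable (\<lambda>j. GK_cross_term P L \<gamma> u (j+1)) \<and> \<bar>GK P L \<gamma> u x\<bar> \<le> C0 + C1 * T"
proof -
  define c where "c = spec_norm P"
  define \<eta> where "\<eta> = \<gamma>/d"
  have \<gamma>: "0 \<le> \<gamma>" "\<gamma> \<le> 1" "\<bar>\<gamma>\<bar> < 1" and d: "0 < d" and \<eta>: "\<bar>\<eta>\<bar> < 1"
    using assms by (auto simp: \<eta>_def)
  have drift_p: "summable (\<lambda>k. c * norm x * \<gamma>^(k+1))"
    using \<gamma>(3) by (intro summable_mult summable_ignore_initial_segment[of _ 1] summable_geometric) simp
  have drift_q: "summable (\<lambda>k. c * norm x * \<eta>^k)" and noise_q: "summable (\<lambda>k. c * \<eta>^k)"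
    using \<eta> by (intro summable_mult summable_geometric; simp)+
  have cross_q: "summable (\<lambda>j. c * real (j+1) * \<eta>^(j+1))"
    using summable_ignore_initial_segment[OF summable_real_mult_power[OF \<eta>], of 1]
    by (simp add: mult.assoc summable_mult)
  define C0 where "C0 = \<bar>x \<bullet> (P *v x)\<bar> + 2 * (\<Sum>k. c * norm x * \<gamma>^(k+1))"
  define C1 where "C1 = 2 * (\<Sum>k. c * norm x * \<eta>^k) + (\<Sum>k. c * \<eta>^k)
                        + 2 * (\<Sum>j. c * real (j+1) * \<eta>^(j+1))"
  show thesis
  proof (rule that)
    fix u :: "nat \<Rightarrow> real^'n" and T :: real
    assume H: "\<And>k. d^k * (norm (u k))\<^sup>2 \<le> T"
    have drift: "summable (GK_drift_term P L \<gamma> u x)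
        \<and> norm (suminf (GK_drift_term P L \<gamma> u x))
            \<le> (\<Sum>k. c * norm x * \<gamma>^(k+1)) + T * (\<Sum>k. c * norm x * \<eta>^k)"
      using abs_GK_drift_term_le[OF assms(1) \<gamma>(1,2) d assms(4) H]
      by (intro summable_suminf_le_affine drift_p drift_q) (simp add: c_def \<eta>_def)
    have noise: "summable (GK_noise_term P \<gamma> u)
        \<and> norm (suminf (GK_noise_term P \<gamma> u)) \<le> (\<Sum>k. 0) + T * (\<Sum>k. c * \<eta>^k)"
      using abs_GK_noise_term_le[OF \<gamma>(1,2) d assms(4) H]
      by (intro summable_suminf_le_affine noise_q summable_zero) (simp add: c_def \<eta>_def)
    have cross: "summable (\<lambda>j. GK_cross_term P L \<gamma> u (j+1))
        \<and> norm (\<Sum>j. GK_cross_term P L \<gamma> u (j+1))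
            \<le> (\<Sum>j. 0) + T * (\<Sum>j. c * real (j+1) * \<eta>^(j+1))"
      using abs_GK_cross_term_le[OF assms(1) \<gamma>(1,2) d assms(4) H]
      by (intro summable_suminf_le_affine cross_q summable_zero)
         (simp only: c_def \<eta>_def add_0 real_norm_def)
    have "\<bar>GK P L \<gamma> u x\<bar> \<le> \<bar>x \<bullet> (P *v x)\<bar> + 2 * norm (suminf (GK_drift_term P L \<gamma> u x))
        + norm (suminf (GK_noise_term P \<gamma> u)) + 2 * norm (\<Sum>j. GK_cross_term P L \<gamma> u (j+1))"
      unfolding GK_eq_terms by (simp add: abs_mult)
    also have "\<dots> \<le> C0 + C1 * T"
      using drift noise cross by (simp add: C0_def C1_def algebra_simps)
    finally show "summable (GK_drift_term P L \<gamma> u x) \<and> summable (GK_noise_term P \<gamma> u)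
       \<and> summable (\<lambda>j. GK_cross_term P L \<gamma> u (j+1)) \<and> \<bar>GK P L \<gamma> u x\<bar> \<le> C0 + C1 * T"
      using drift noise cross by blast
  qed
qed

lemma borel_measurable_GK:
  assumes [measurable]: "\<And>k. w k \<in> borel_measurable M"
  shows "(\<lambda>\<omega>. GK P L \<gamma> (\<lambda>k. w k \<omega>) x) \<in> borel_measurable M"
  unfolding GK_def by measurable

lemma AE_summable_integrable_suminf_nonneg:
  fixes f :: "nat \<Rightarrow> 'a \<Rightarrow> real"
  assumes int: "\<And>k. integrable M (f k)" and nonneg: "\<And>k \<omega>. 0 \<le> f k \<omega>"
    and sum: "summable (\<lambda>k. integral\<^sup>L M (f k))"
  shows "(AE \<omega> in M. summable (\<lambda>k. f k \<omega>)) \<and> integrable M (\<lambda>\<omega>. \<Sum>k. f k \<omega>)"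
proof -
  have [measurable]: "f k \<in> borel_measurable M" for k using int by auto
  have "(\<integral>\<^sup>+\<omega>. (\<Sum>k. ennreal (f k \<omega>)) \<partial>M) = (\<Sum>k. \<integral>\<^sup>+\<omega>. ennreal (f k \<omega>) \<partial>M)"
    by (rule nn_integral_suminf) measurable
  also have "\<dots> = (\<Sum>k. ennreal (integral\<^sup>L M (f k)))"
    by (intro suminf_cong nn_integral_eq_integral int) (simp add: nonneg)
  also have "\<dots> = ennreal (\<Sum>k. integral\<^sup>L M (f k))"
    by (rule suminf_ennreal2[OF _ sum]) (simp add: nonneg integral_nonneg)
  finally have "(\<integral>\<^sup>+\<omega>. (\<Sum>k. ennreal (f k \<omega>)) \<partial>M) \<noteq> \<infinity>" by simp
  then have "AE \<omega> in M. (\<Sum>k. ennreal (f k \<omega>)) \<noteq> \<infinity>"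
    by (intro nn_integral_PInf_AE) measurable
  then have AE: "AE \<omega> in M. summable (\<lambda>k. f k \<omega>)"
    by eventually_elim (rule summable_suminf_not_top[OF nonneg], simp)
  moreover have "integrable M (\<lambda>\<omega>. \<Sum>k. f k \<omega>)"
    using AE sum by (intro integrable_suminf int) (simp_all add: nonneg)
  ultimately show ?thesis ..
qed

lemma AE_summable_integrable_weighted_fourth_moments:
  fixes w :: "nat \<Rightarrow> 'a \<Rightarrow> 'b :: real_normed_vector"
  assumes int: "\<And>k. integrable M (\<lambda>\<omega>. norm (w k \<omega>) ^ 4)"
    and bound: "\<And>k. integral\<^sup>L M (\<lambda>\<omega>. norm (w k \<omega>) ^ 4) \<le> s" and d: "\<bar>d\<bar> < 1"
  shows "(AE \<omega> in M. summable (\<lambda>k. (d^k * (norm (w k \<omega>))\<^sup>2)\<^sup>2))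
           \<and> integrable M (\<lambda>\<omega>. \<Sum>k. (d^k * (norm (w k \<omega>))\<^sup>2)\<^sup>2)"
proof (rule AE_summable_integrable_suminf_nonneg)
  have eq: "(d^k * (norm (w k \<omega>))\<^sup>2)\<^sup>2 = (d\<^sup>2)^k * norm (w k \<omega>) ^ 4" for k \<omega>
    by (simp add: power_mult_distrib power_mult[symmetric] mult.commute)
  show "integrable M (\<lambda>\<omega>. (d^k * (norm (w k \<omega>))\<^sup>2)\<^sup>2)" for k
    unfolding eq using int by simp
  show "summable (\<lambda>k. \<integral>\<omega>. (d^k * (norm (w k \<omega>))\<^sup>2)\<^sup>2 \<partial>M)"
  proof (rule summable_comparison_test)
    show "summable (\<lambda>k. (d\<^sup>2)^k * s)"
      using d by (intro summable_mult2 summable_geometric) (simp add: abs_square_less_1)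
    show "\<exists>N. \<forall>k\<ge>N. norm (\<integral>\<omega>. (d^k * (norm (w k \<omega>))\<^sup>2)\<^sup>2 \<partial>M) \<le> (d\<^sup>2)^k * s"
      unfolding eq using bound by (auto intro!: mult_left_mono integral_nonneg)
  qed
qed simp

lemma (in finite_measure) integrable_power2_of_abs_le_sqrt:
  fixes g V :: "'a \<Rightarrow> real"
  assumes V: "integrable M V" and g: "g \<in> borel_measurable M"
    and bound: "AE \<omega> in M. 0 \<le> V \<omega> \<and> \<bar>g \<omega>\<bar> \<le> C0 + C1 * sqrt (V \<omega>)"
  shows "integrable M (\<lambda>\<omega>. (g \<omega>)\<^sup>2)"
proof (rule Bochner_Integration.integrable_bound)
  show "integrable M (\<lambda>\<omega>. 2 * C0\<^sup>2 + 2 * C1\<^sup>2 * V \<omega>)" using V by simp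
  show "AE \<omega> in M. norm ((g \<omega>)\<^sup>2) \<le> norm (2 * C0\<^sup>2 + 2 * C1\<^sup>2 * V \<omega>)"
    using bound
  proof eventually_elim
    case (elim \<omega>)
    have "(g \<omega>)\<^sup>2 \<le> (C0 + C1 * sqrt (V \<omega>))\<^sup>2"
      using elim by (simp add: abs_le_square_iff[symmetric] abs_le_iff)
    also have "\<dots> \<le> 2 * C0\<^sup>2 + 2 * C1\<^sup>2 * V \<omega>"
      using elim sum_squares_bound[of C0 "C1 * sqrt (V \<omega>)"]
      by (simp add: power2_sum power_mult_distrib algebra_simps)
    finally show ?case by simp
  qed
qed (use g in simp)

lemma (in prob_space) GK_summable_and_square_integrable:
  fixes w :: "nat \<Rightarrow> 'a \<Rightarrow> real^'n" and P L :: "real^'n^'n"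
  assumes meas: "\<And>k. w k \<in> borel_measurable M"
    and int: "\<And>k. integrable M (\<lambda>\<omega>. norm (w k \<omega>) ^ 4)"
    and mom: "\<And>k. expectation (\<lambda>\<omega>. norm (w k \<omega>) ^ 4) \<le> s"
    and L: "spec_norm L \<le> 1" and \<gamma>: "0 < \<gamma>" "\<gamma> < 1"
  shows "(AE \<omega> in M. summable (GK_drift_term P L \<gamma> (\<lambda>k. w k \<omega>) x)
            \<and> summable (GK_noise_term P \<gamma> (\<lambda>k. w k \<omega>))
            \<and> summable (\<lambda>j. GK_cross_term P L \<gamma> (\<lambda>k. w k \<omega>) (j+1)))
         \<and> integrable M (\<lambda>\<omega>. (GK P L \<gamma> (\<lambda>k. w k \<omega>) x)\<^sup>2)"
proof -
  define d where "d = (1 + \<gamma>) / 2"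
  define V where "V \<omega> = (\<Sum>k. (d^k * (norm (w k \<omega>))\<^sup>2)\<^sup>2)" for \<omega>
  have d: "\<gamma> < d" "d \<le> 1" "\<bar>d\<bar> < 1" using \<gamma> by (auto simp: d_def)
  have V: "(AE \<omega> in M. summable (\<lambda>k. (d^k * (norm (w k \<omega>))\<^sup>2)\<^sup>2)) \<and> integrable M V"
    unfolding V_def using int mom d(3) by (rule AE_summable_integrable_weighted_fourth_moments)
  obtain C0 C1 where C: "\<And>u T. (\<And>k. d^k * (norm (u k))\<^sup>2 \<le> T) \<Longrightarrow>
      summable (GK_drift_term P L \<gamma> u x) \<and> summable (GK_noise_term P \<gamma> u)
      \<and> summable (\<lambda>j. GK_cross_term P L \<gamma> u (j+1)) \<and> \<bar>GK P L \<gamma> u x\<bar> \<le> C0 + C1 * T"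
    by (rule GK_affine_bound[OF L \<gamma>(1) d(1,2), where P = P and x = x], rule that, blast)
  have "AE \<omega> in M. 0 \<le> V \<omega>
      \<and> summable (GK_drift_term P L \<gamma> (\<lambda>k. w k \<omega>) x)
      \<and> summable (GK_noise_term P \<gamma> (\<lambda>k. w k \<omega>))
      \<and> summable (\<lambda>j. GK_cross_term P L \<gamma> (\<lambda>k. w k \<omega>) (j+1))
      \<and> \<bar>GK P L \<gamma> (\<lambda>k. w k \<omega>) x\<bar> \<le> C0 + C1 * sqrt (V \<omega>)"
    using conjunct1[OF V]
  proof eventually_elim
    case (elim \<omega>)
    have bound: "d^k * (norm (w k \<omega>))\<^sup>2 \<le> sqrt (V \<omega>)" for k
      using abs_le_sqrt_suminf_power2[OF elim] unfolding V_def by (rule abs_le_D1)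
    have "0 \<le> V \<omega>" unfolding V_def by (intro suminf_nonneg elim) simp
    with C[of "\<lambda>k. w k \<omega>", OF bound] show ?case by blast
  qed
  then show ?thesis
    using integrable_power2_of_abs_le_sqrt[OF conjunct2[OF V] borel_measurable_GK[OF meas]]
    by (auto elim: eventually_mono)
qed

theorem theorem2:
  fixes M :: "'s measure" and D :: "(real^'n) measure"
    and w :: "nat \<Rightarrow> 's \<Rightarrow> real^'n"
    and A :: "real^'n^'n" and B :: "real^'m^'n" and K :: "real^'n^'m"
    and Q :: "real^'n^'n" and R :: "real^'m^'m" and P :: "real^'n^'n"
    and \<gamma> \<sigma>4 \<rho>K :: real
  assumes "prob_space M"
    and meas: "\<And>k. w k \<in> borel_measurable M"
    and indep: "prob_space.indep_vars M (\<lambda>_. borel) w UNIV"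
    and distr: "\<And>k. distr M borel (w k) = D"
    and mean0: "\<And>k. integrable M (w k) \<and> prob_space.expectation M (w k) = 0"
    and mom4: "\<And>k. integrable M (\<lambda>\<omega>. norm (w k \<omega>) ^ 4)
                  \<and> prob_space.expectation M (\<lambda>\<omega>. norm (w k \<omega>) ^ 4) \<le> \<sigma>4 ^ 4"
    and Qpd: "pos_def_mat Q" and Rpd: "pos_def_mat R"
    and gam: "0 < \<gamma>" "\<gamma> < 1"
    and Lyap: "P = Q + transpose K ** R ** K + \<gamma> *\<^sub>R (transpose (A + B ** K) ** P ** (A + B ** K))"
    and rho: "spec_norm (A + B ** K) = \<rho>K" "\<rho>K < 1"
  shows "\<forall>x :: real^'n.
           (AE \<omega> in M.
              summable (\<lambda>k. \<gamma>^(k+1) * (w k \<omega> \<bullet> (P *v (matpow (A + B ** K) (k+1) *v x))))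
            \<and> summable (\<lambda>k. \<gamma>^(k+1) * (w k \<omega> \<bullet> (P *v w k \<omega>)))
            \<and> summable (\<lambda>j. (\<lambda>k. \<gamma>^(k+1) * (w k \<omega> \<bullet> (P *v (\<Sum>\<tau><k. matpow (A + B ** K) (k-\<tau>) *v w \<tau> \<omega>)))) (j+1)))
         \<and> integrable M (\<lambda>\<omega>. (GK P (A + B ** K) \<gamma> (\<lambda>k. w k \<omega>) x)\<^sup>2)"
proof -
  interpret prob_space M by fact
  have "spec_norm (A + B ** K) \<le> 1" using rho by simp
  from GK_summable_and_square_integrable[where w = w and s = "\<sigma>4 ^ 4", OF meas _ _ this gam] mom4
  show ?thesis
    by (simp add: GK_drift_term_def[abs_def] GK_noise_term_def[abs_def] GK_cross_term_def)
qed

end
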